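(* A graph $G$ is degree-perfect if and only if $G$ has no induced subgraph isomorphic to a cycle of length other than $4$ (equivalently, $G$ is bipartite and every induced cycle of $G$ is a $4$-cycle).
   Context: All graphs are finite and simple. The biclique number $\tau(H)$ is the largest $t$ such that $H$ has a (not necessarily induced) subgraph isomorphic to $K_{t,t}$, and $\delta(H)$ is the minimum degree. A graph $G$ is degree-perfect if every induced subgraph $H$ of $G$ (with at least one vertex) satisfies $\delta(H)\le \tau(H)$. (It may be used that, by a theorem of Golumbic and Goss, every bipartite graph with at least one edge whose only induced cycles are $4$-cycles has a simplicial edge, i.e. an edge $uv$ such that every vertex of $N(u)$ is adjacent to every vertex of $N(v)$.) *)

theory Defs
  imports Main
begin

text \<open>A finite simple graph: finite vertex set V and a symmetric irreflexive
adjacency relation E (only its restriction to V matters).\<close>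

definition simple_graph :: "'a set \<Rightarrow> ('a \<Rightarrow> 'a \<Rightarrow> bool) \<Rightarrow> bool" where
  "simple_graph V E \<longleftrightarrow> finite V \<and> (\<forall>u v. E u v \<longrightarrow> E v u) \<and> (\<forall>v. \<not> E v v)"

definition ideg :: "('a \<Rightarrow> 'a \<Rightarrow> bool) \<Rightarrow> 'a set \<Rightarrow> 'a \<Rightarrow> nat" where
  "ideg E S v = card {u \<in> S. E v u}"

definition min_degree :: "('a \<Rightarrow> 'a \<Rightarrow> bool) \<Rightarrow> 'a set \<Rightarrow> nat" where
  "min_degree E S = Min (ideg E S ` S)"

definition has_biclique :: "('a \<Rightarrow> 'a \<Rightarrow> bool) \<Rightarrow> 'a set \<Rightarrow> nat \<Rightarrow> bool" where
  "has_biclique E S t \<longleftrightarrow> (\<exists>A B. A \<subseteq> S \<and> B \<subseteq> S \<and> A \<inter> B = {} \<and>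
      card A = t \<and> card B = t \<and> finite A \<and> finite B \<and> (\<forall>a\<in>A. \<forall>b\<in>B. E a b))"

definition biclique_number :: "('a \<Rightarrow> 'a \<Rightarrow> bool) \<Rightarrow> 'a set \<Rightarrow> nat" where
  "biclique_number E S = (GREATEST t. has_biclique E S t)"

definition degree_perfect :: "'a set \<Rightarrow> ('a \<Rightarrow> 'a \<Rightarrow> bool) \<Rightarrow> bool" where
  "degree_perfect V E \<longleftrightarrow>
     (\<forall>S. S \<subseteq> V \<and> S \<noteq> {} \<longrightarrow> min_degree E S \<le> biclique_number E S)"

definition has_induced_cycle :: "'a set \<Rightarrow> ('a \<Rightarrow> 'a \<Rightarrow> bool) \<Rightarrow> nat \<Rightarrow> bool" where
  "has_induced_cycle V E k \<longleftrightarrow> 3 \<le> k \<and> (\<exists>f. inj_on f {0..<k} \<and> f ` {0..<k} \<subseteq> V \<and>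
     (\<forall>i<k. \<forall>j<k. E (f i) (f j) \<longleftrightarrow> (j = Suc i mod k \<or> i = Suc j mod k)))"

end

theory Submission
  imports Defs
begin

text \<open>
  An induced cycle of length \<open>k \<noteq> 4\<close> has minimum degree 2 but contains no \<open>K\<^bsub>2,2\<^esub>\<close>,
  so a degree-perfect graph has none.

  Conversely, in a graph all of whose induced cycles are 4-cycles, every induced subgraph \<open>H\<close>
  with an edge has a weakly simplicial vertex \<open>x\<close>: the neighbourhoods of the neighbours of
  \<open>x\<close> form a chain. If \<open>z\<close> is the neighbour of \<open>x\<close> with the smallest neighbourhood, then
  any \<open>\<delta>(H)\<close> neighbours of \<open>z\<close> and any \<open>\<delta>(H)\<close> neighbours of \<open>x\<close> span a biclique.
  Weakly simplicial vertices are found by induction on the vertex set \<open>W\<close>, for a stronger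
  statement: if \<open>S\<close> is the trace on \<open>W\<close> of the neighbourhood of an outside vertex, some
  weakly simplicial vertex is far from \<open>S\<close>. Either the component of a far vertex in
  \<open>W - S\<close>, together with its neighbours in \<open>S\<close>, is a proper subgraph, or all of \<open>S\<close> has
  a common neighbour \<open>y \<in> W - S\<close> (a Helly-type property, since otherwise induced cycles of
  length at least 5 appear), and a weakly simplicial vertex of \<open>W - {y}\<close> remains one in \<open>W\<close>.
\<close>

section \<open>Neighbourhoods, minimum degree and biclique number\<close>

definition nbhd :: "('a \<Rightarrow> 'a \<Rightarrow> bool) \<Rightarrow> 'a set \<Rightarrow> 'a \<Rightarrow> 'a set" where
  "nbhd E W v = {u \<in> W. E v u}"

lemma nbhd_insert: "nbhd E (insert y W) v = (if E v y then insert y (nbhd E W v) else nbhd E W v)"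
  by (auto simp: nbhd_def)

lemma ideg_eq_card_nbhd: "ideg E S v = card (nbhd E S v)"
  by (simp add: ideg_def nbhd_def)

lemma le_min_degree:
  assumes "finite S" "S \<noteq> {}" "\<And>v. v \<in> S \<Longrightarrow> n \<le> ideg E S v"
  shows "n \<le> min_degree E S"
  using assms by (simp add: min_degree_def)

lemma min_degree_le_ideg:
  assumes "finite S" "v \<in> S"
  shows "min_degree E S \<le> ideg E S v"
  using assms by (simp add: min_degree_def)

lemma has_biclique_0: "has_biclique E S 0"
  unfolding has_biclique_def by (intro exI[of _ "{}"]) auto

lemma biclique_number_le:
  assumes "\<And>t. has_biclique E S t \<Longrightarrow> t \<le> n"
  shows "biclique_number E S \<le> n"
  unfolding biclique_number_def
  using GreatestI_nat[of "has_biclique E S" 0 n, OF has_biclique_0 assms] assms by blast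

lemma has_biclique_le_card:
  assumes "finite S" "has_biclique E S t"
  shows "t \<le> card S"
  using assms card_mono[OF assms(1)] by (auto simp: has_biclique_def)

lemma has_biclique_le_biclique_number:
  assumes "finite S" "has_biclique E S t"
  shows "t \<le> biclique_number E S"
  unfolding biclique_number_def
  using Greatest_le_nat[of "has_biclique E S" t "card S"] has_biclique_le_card assms by blast

section \<open>Induced cycles\<close>

lemma Suc_mod_if: "i < k \<Longrightarrow> Suc i mod k = (if Suc i = k then 0 else Suc i)"
  by (simp add: mod_Suc)

lemma cycle_no_two_common_neighbours:
  fixes k p q r s :: nat
  assumes "3 \<le> k" "k \<noteq> 4" "p < k" "q < k" "r < k" "s < k" "p \<noteq> q" "r \<noteq> s"
    "r = Suc p mod k \<or> p = Suc r mod k" "s = Suc p mod k \<or> p = Suc s mod k"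
    "r = Suc q mod k \<or> q = Suc r mod k" "s = Suc q mod k \<or> q = Suc s mod k"
  shows False
  using assms(1-8) assms(9-12)[unfolded Suc_mod_if[OF assms(3)] Suc_mod_if[OF assms(4)]
      Suc_mod_if[OF assms(5)] Suc_mod_if[OF assms(6)]]
  by (auto split: if_splits)

lemma two_elements:
  assumes "finite A" "2 \<le> card A"
  obtains a b where "a \<in> A" "b \<in> A" "a \<noteq> b"
  using assms by (metis card_le_Suc0_iff_eq not_less_eq_eq numeral_2_eq_2)

lemma induced_cycle_min_degree:
  assumes k: "3 \<le> k" and inj: "inj_on f {0..<k}"
    and adj: "\<And>i j. i < k \<Longrightarrow> j < k \<Longrightarrow> E (f i) (f j) \<longleftrightarrow> (j = Suc i mod k \<or> i = Suc j mod k)"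
  shows "2 \<le> min_degree E (f ` {0..<k})"
proof (rule le_min_degree)
  show "finite (f ` {0..<k})" "f ` {0..<k} \<noteq> {}" using k by auto
  fix v assume "v \<in> f ` {0..<k}"
  then obtain i where i: "i < k" "v = f i" by auto
  define j where "j = (if i = 0 then k - 1 else i - 1)"
  have j: "j < k" "Suc j mod k = i" "Suc i mod k \<noteq> j" "Suc i mod k < k"
    using i k by (auto simp: j_def Suc_mod_if)
  then have "f (Suc i mod k) \<noteq> f j" using inj by (auto simp: inj_on_def)
  then have "card {f (Suc i mod k), f j} = 2" by simp
  moreover have "{f (Suc i mod k), f j} \<subseteq> {u \<in> f ` {0..<k}. E v u}"
    using adj i j by auto
  moreover have "finite {u \<in> f ` {0..<k}. E v u}" by simp
  ultimately show "2 \<le> ideg E (f ` {0..<k}) v"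
    unfolding ideg_def using card_mono by metis
qed

lemma induced_cycle_biclique_number:
  assumes k: "3 \<le> k" "k \<noteq> 4"
    and adj: "\<And>i j. i < k \<Longrightarrow> j < k \<Longrightarrow> E (f i) (f j) \<longleftrightarrow> (j = Suc i mod k \<or> i = Suc j mod k)"
  shows "biclique_number E (f ` {0..<k}) \<le> 1"
proof (rule biclique_number_le, rule ccontr)
  fix t assume "has_biclique E (f ` {0..<k}) t" "\<not> t \<le> 1"
  then obtain A B where AB: "A \<subseteq> f ` {0..<k}" "B \<subseteq> f ` {0..<k}" "finite A" "finite B"
    "2 \<le> card A" "2 \<le> card B" "\<forall>a\<in>A. \<forall>b\<in>B. E a b" by (auto simp: has_biclique_def)
  obtain a1 a2 where a: "a1 \<in> A" "a2 \<in> A" "a1 \<noteq> a2" using two_elements AB(3,5) by blast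
  obtain b1 b2 where b: "b1 \<in> B" "b2 \<in> B" "b1 \<noteq> b2" using two_elements AB(4,6) by blast
  obtain p where "p < k" "a1 = f p" using a AB(1) by auto
  moreover obtain q where "q < k" "a2 = f q" using a AB(1) by auto
  moreover obtain r where "r < k" "b1 = f r" using b AB(2) by auto
  moreover obtain s where "s < k" "b2 = f s" using b AB(2) by auto
  ultimately show False
    using cycle_no_two_common_neighbours[of k p q r s] k adj a b AB(7) by blast
qed

lemma induced_cycle_not_degree_perfect:
  assumes "has_induced_cycle V E k" "k \<noteq> 4"
  shows "\<not> degree_perfect V E"
proof
  assume dp: "degree_perfect V E"
  obtain f where k: "3 \<le> k" and f: "inj_on f {0..<k}" "f ` {0..<k} \<subseteq> V"
    and adj: "\<And>i j. i < k \<Longrightarrow> j < k \<Longrightarrow> E (f i) (f j) \<longleftrightarrow> (j = Suc i mod k \<or> i = Suc j mod k)"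
    using assms(1) by (auto simp: has_induced_cycle_def)
  have "f ` {0..<k} \<noteq> {}" using k by auto
  then have "min_degree E (f ` {0..<k}) \<le> biclique_number E (f ` {0..<k})"
    using dp f(2) by (simp add: degree_perfect_def)
  moreover have "2 \<le> min_degree E (f ` {0..<k})" by (rule induced_cycle_min_degree[where E=E, OF k f(1) adj])
  moreover have "biclique_number E (f ` {0..<k}) \<le> 1"
    by (rule induced_cycle_biclique_number[where E=E and f=f, OF k assms(2) adj])
  ultimately show False by simp
qed

section \<open>Induced paths\<close>

definition induced_path :: "('a \<Rightarrow> 'a \<Rightarrow> bool) \<Rightarrow> 'a list \<Rightarrow> bool" where
  "induced_path E xs \<longleftrightarrow> distinct xs \<and>
     (\<forall>i<length xs. \<forall>j<length xs. E (xs!i) (xs!j) \<longleftrightarrow> (j = Suc i \<or> i = Suc j))"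

lemma induced_path_Nil: "induced_path E []"
  by (simp add: induced_path_def)

lemma induced_path_Cons:
  assumes sym: "\<And>u v. E u v \<Longrightarrow> E v u" and irr: "\<not> E a a"
    and p: "induced_path E xs" "a \<notin> set xs"
    and hd: "xs \<noteq> [] \<longrightarrow> E a (hd xs)" and tl: "\<forall>z\<in>set (tl xs). \<not> E a z"
  shows "induced_path E (a # xs)"
proof -
  have a: "E a (xs!j) \<longleftrightarrow> j = 0" if "j < length xs" for j
  proof (cases j)
    case 0 then show ?thesis using hd that by (simp add: hd_conv_nth)
  next
    case (Suc j')
    then have "xs ! j \<in> set (tl xs)" using that by (simp add: nth_tl[symmetric])
    then show ?thesis using tl Suc by auto
  qed
  have "E ((a#xs)!i) ((a#xs)!j) \<longleftrightarrow> (j = Suc i \<or> i = Suc j)"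
    if "i < Suc (length xs)" "j < Suc (length xs)" for i j
    using that p(1) a[of "i - 1"] a[of "j - 1"] irr sym
    by (cases i; cases j) (auto simp: induced_path_def)
  then show ?thesis using p by (simp add: induced_path_def)
qed

lemma induced_path_rev:
  assumes "induced_path E xs"
  shows "induced_path E (rev xs)"
proof -
  have "E (rev xs ! i) (rev xs ! j) \<longleftrightarrow> (j = Suc i \<or> i = Suc j)"
    if "i < length xs" "j < length xs" for i j
  proof -
    have "E (rev xs ! i) (rev xs ! j) \<longleftrightarrow>
        (length xs - Suc j = Suc (length xs - Suc i) \<or> length xs - Suc i = Suc (length xs - Suc j))"
      using assms that by (simp add: rev_nth induced_path_def)
    also have "\<dots> \<longleftrightarrow> (j = Suc i \<or> i = Suc j)" using that by arith
    finally show ?thesis .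
  qed
  then show ?thesis using assms by (simp add: induced_path_def)
qed

lemma induced_path_snoc:
  assumes sym: "\<And>u v. E u v \<Longrightarrow> E v u" and irr: "\<not> E b b"
    and p: "induced_path E xs" "b \<notin> set xs"
    and last: "xs \<noteq> [] \<longrightarrow> E (last xs) b" and butlast: "\<forall>z\<in>set (butlast xs). \<not> E z b"
  shows "induced_path E (xs @ [b])"
proof -
  have "tl (rev xs) = rev (butlast xs)"
    by (metis butlast_rev rev_rev_ident)
  then have "induced_path E (b # rev xs)"
    using sym irr induced_path_rev[OF p(1)] p(2) last butlast
    by (intro induced_path_Cons) (auto simp: hd_rev intro: sym)
  then show ?thesis using induced_path_rev by fastforce
qed

lemma induced_path_close_cycle:
  assumes sym: "\<And>u v. E u v \<Longrightarrow> E v u" and irr: "\<And>v. \<not> E v v"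
    and r: "induced_path E r" "2 \<le> length r" "set r \<subseteq> V"
    and a: "a \<in> V" "a \<notin> set r" "E a (hd r)" "E a (last r)" "\<forall>z\<in>set (butlast (tl r)). \<not> E a z"
  shows "has_induced_cycle V E (Suc (length r))"
proof -
  define k where "k = Suc (length r)"
  have k3: "3 \<le> k" using r(2) by (simp add: k_def)
  have a_adj: "E a (r!j) \<longleftrightarrow> j = 0 \<or> Suc j = length r" if "j < length r" for j
  proof (cases "j = 0 \<or> Suc j = length r")
    case True
    have "r \<noteq> []" using r(2) by auto
    then have "hd r = r ! 0" "last r = r ! (length r - 1)" by (simp_all add: hd_conv_nth last_conv_nth)
    then show ?thesis using True a(3,4) by (metis diff_Suc_1)
  next
    case False
    then have "r ! j = butlast (tl r) ! (j - 1)" "j - 1 < length (butlast (tl r))"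
      using that by (auto simp: nth_butlast nth_tl)
    then have "r ! j \<in> set (butlast (tl r))" by simp
    then show ?thesis using a(5) False by auto
  qed
  have inj: "inj_on (\<lambda>i. (a#r)!i) {0..<k}"
    using r(1) a(2) by (auto simp: inj_on_def k_def nth_eq_iff_index_eq induced_path_def)
  have img: "(\<lambda>i. (a#r)!i) ` {0..<k} \<subseteq> V"
    using r(3) a(1) nth_mem[of _ "a#r"] by (fastforce simp: k_def)
  have "E ((a#r)!i) ((a#r)!j) \<longleftrightarrow> (j = Suc i mod k \<or> i = Suc j mod k)"
    if "i < k" "j < k" for i j
    using that k3 r(1) a_adj[of "i - 1"] a_adj[of "j - 1"] irr sym
    by (cases i; cases j) (auto simp: k_def induced_path_def Suc_mod_if)
  then show ?thesis
    unfolding has_induced_cycle_def k_def[symmetric] using k3 inj img by blast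
qed

section \<open>Walks and components\<close>

definition walk_in :: "('a \<Rightarrow> 'a \<Rightarrow> bool) \<Rightarrow> 'a set \<Rightarrow> 'a list \<Rightarrow> bool" where
  "walk_in E C p \<longleftrightarrow> p \<noteq> [] \<and> set p \<subseteq> C \<and> (\<forall>i. Suc i < length p \<longrightarrow> E (p!i) (p!Suc i))"

lemma walk_in_append:
  assumes "walk_in E C xs" "walk_in E C ys" "E (last xs) (hd ys)"
  shows "walk_in E C (xs @ ys)"
proof -
  have "E ((xs@ys)!i) ((xs@ys)!Suc i)" if "Suc i < length (xs@ys)" for i
  proof -
    consider "Suc i < length xs" | "Suc i = length xs" | "length xs \<le> i" by linarith
    then show ?thesis
    proof cases
      case 1 then show ?thesis using assms(1) by (simp add: nth_append walk_in_def)
    next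
      case 2
      then have "i = length xs - 1" by simp
      then have "(xs@ys)!i = last xs" "(xs@ys)!Suc i = hd ys" using assms(1,2)
        by (auto simp: nth_append walk_in_def last_conv_nth hd_conv_nth)
      then show ?thesis using assms(3) by simp
    next
      case 3
      then show ?thesis using that assms(2) by (simp add: nth_append walk_in_def Suc_diff_le)
    qed
  qed
  then show ?thesis using assms by (auto simp: walk_in_def)
qed

lemma walk_in_take: "walk_in E C p \<Longrightarrow> 0 < n \<Longrightarrow> walk_in E C (take n p)"
  by (auto simp: walk_in_def dest: in_set_takeD)

lemma walk_in_drop: "walk_in E C p \<Longrightarrow> n < length p \<Longrightarrow> walk_in E C (drop n p)"
  by (auto simp: walk_in_def dest: in_set_dropD)

lemma walk_in_if_rtranclp:
  assumes "(\<lambda>u v. u \<in> C \<and> v \<in> C \<and> E u v)\<^sup>*\<^sup>* a b" "a \<in> C"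
  obtains p where "walk_in E C p" "hd p = a" "last p = b"
  using assms
proof (induction arbitrary: thesis rule: rtranclp_induct)
  case base
  then show ?case by (auto simp: walk_in_def intro: base(1)[of "[a]"])
next
  case (step b c)
  then obtain p where p: "walk_in E C p" "hd p = a" "last p = b" by blast
  have "walk_in E C (p @ [c])"
    by (rule walk_in_append) (use p step in \<open>auto simp: walk_in_def\<close>)
  then show ?case using p step.prems(1)[of "p @ [c]"] by (auto simp: walk_in_def)
qed

lemma last_take_Suc: "i < length p \<Longrightarrow> last (take (Suc i) p) = p ! i"
  by (simp add: last_conv_nth take_Suc_conv_app_nth)

lemma walk_in_skip_repetition:
  assumes p: "walk_in E C p" and ij: "i < j" "j < length p" "p!i = p!j"
  shows "walk_in E C (take i p @ drop j p)"
proof (cases i)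
  case 0
  then show ?thesis using walk_in_drop[OF p ij(2)] by simp
next
  case (Suc i')
  have "Suc i' < length p" using ij Suc by simp
  then have "E (p!i') (p!Suc i')" using p unfolding walk_in_def by blast
  then have "E (p!i') (p!j)" using ij(3) Suc by simp
  then show ?thesis using walk_in_take[OF p] walk_in_drop[OF p ij(2)] ij Suc
    by (intro walk_in_append) (auto simp: last_take_Suc hd_drop_conv_nth)
qed

lemma walk_in_skip_chord:
  assumes p: "walk_in E C p" and ij: "i < j" "j < length p" "E (p!i) (p!j)"
  shows "walk_in E C (take (Suc i) p @ drop j p)"
  using walk_in_take[OF p] walk_in_drop[OF p ij(2)] ij
  by (intro walk_in_append) (auto simp: last_take_Suc hd_drop_conv_nth)

lemma shortest_walk_induced_path:
  assumes sym: "\<And>u v. E u v \<Longrightarrow> E v u" and irr: "\<And>v. \<not> E v v"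
    and p0: "walk_in E C p0" "P (hd p0)" "Q (last p0)"
  obtains p where "walk_in E C p" "induced_path E p" "P (hd p)" "Q (last p)"
    "\<And>i. 0 < i \<Longrightarrow> i < length p \<Longrightarrow> \<not> P (p!i)"
    "\<And>i. Suc i < length p \<Longrightarrow> \<not> Q (p!i)"
proof -
  define R where "R q \<longleftrightarrow> walk_in E C q \<and> P (hd q) \<and> Q (last q)" for q
  obtain p where "R p" and min: "\<And>q. R q \<Longrightarrow> length p \<le> length q"
    using ex_has_least_nat[of R p0 length] p0 by (auto simp: R_def)
  then have p: "walk_in E C p" "P (hd p)" "Q (last p)" "p \<noteq> []" by (auto simp: R_def walk_in_def)
  have P_hd: "\<not> P (p!i)" if "0 < i" "i < length p" for i
    using min[of "drop i p"] walk_in_drop[OF p(1) that(2)] p(3) that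
    by (force simp: R_def hd_drop_conv_nth)
  have Q_last: "\<not> Q (p!i)" if "Suc i < length p" for i
    using min[of "take (Suc i) p"] walk_in_take[OF p(1)] p(2) that
    by (force simp: R_def last_take_Suc)
  have distinct: "p!i \<noteq> p!j" if "i < j" "j < length p" for i j
  proof
    assume "p!i = p!j"
    then have "R (take i p @ drop j p)"
      using walk_in_skip_repetition[OF p(1) that] p that
      by (cases i) (auto simp: R_def hd_drop_conv_nth hd_conv_nth[of p] hd_append)
    then show False using min that by fastforce
  qed
  have no_chord: "\<not> E (p!i) (p!j)" if "Suc i < j" "j < length p" for i j
  proof
    assume "E (p!i) (p!j)"
    then have "R (take (Suc i) p @ drop j p)"
      using walk_in_skip_chord[OF p(1)] p that by (auto simp: R_def)
    then show False using min that by fastforce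
  qed
  have "E (p!i) (p!j) \<longleftrightarrow> (j = Suc i \<or> i = Suc j)" if "i < length p" "j < length p" for i j
  proof -
    consider "j = Suc i" | "i = Suc j" | "i = j" | "Suc i < j" | "Suc j < i" by linarith
    then show ?thesis
      using p(1) that no_chord[of i j] no_chord[of j i] irr sym by cases (auto simp: walk_in_def)
  qed
  moreover have "distinct p"
    unfolding distinct_conv_nth using distinct by (metis linorder_neqE_nat)
  ultimately have "induced_path E p" by (simp add: induced_path_def)
  then show ?thesis using that p P_hd Q_last by blast
qed

definition component :: "('a \<Rightarrow> 'a \<Rightarrow> bool) \<Rightarrow> 'a set \<Rightarrow> 'a \<Rightarrow> 'a set" where
  "component E D x = {v. (\<lambda>u w. u \<in> D \<and> w \<in> D \<and> E u w)\<^sup>*\<^sup>* x v}"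

lemma self_in_component: "x \<in> component E D x"
  by (simp add: component_def)

lemma component_subset:
  assumes "x \<in> D"
  shows "component E D x \<subseteq> D"
proof
  fix v assume "v \<in> component E D x"
  then have "(\<lambda>u w. u \<in> D \<and> w \<in> D \<and> E u w)\<^sup>*\<^sup>* x v" by (simp add: component_def)
  then show "v \<in> D" by (induction rule: rtranclp_induct) (use assms in auto)
qed

lemma component_closed:
  assumes "x \<in> D" "c \<in> component E D x" "w \<in> D" "E c w"
  shows "w \<in> component E D x"
proof -
  have "(\<lambda>u w. u \<in> D \<and> w \<in> D \<and> E u w)\<^sup>*\<^sup>* x c" using assms(2) by (simp add: component_def)
  moreover have "c \<in> D" using component_subset[OF assms(1)] assms(2) by blast
  ultimately show ?thesis using assms(3,4) by (simp add: component_def rtranclp.rtrancl_into_rtrancl)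
qed

lemma walk_in_component:
  assumes sym: "\<And>u v. E u v \<Longrightarrow> E v u" and "x \<in> D" "a \<in> component E D x" "b \<in> component E D x"
  obtains p where "walk_in E D p" "hd p = a" "last p = b"
proof -
  let ?R = "\<lambda>u w. u \<in> D \<and> w \<in> D \<and> E u w"
  have "symp ?R" using sym by (auto intro: sympI)
  then have "symp ?R\<^sup>*\<^sup>*" by (rule symp_rtranclp)
  moreover have "?R\<^sup>*\<^sup>* x a" "?R\<^sup>*\<^sup>* x b" using assms(3,4) by (simp_all add: component_def)
  ultimately have "?R\<^sup>*\<^sup>* a x" "?R\<^sup>*\<^sup>* x b" by (auto dest: sympD)
  then have ab: "?R\<^sup>*\<^sup>* a b" by (rule rtranclp_trans)
  have "a \<in> D" using component_subset[OF assms(2)] assms(3) by blast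
  with ab show ?thesis using that by (rule walk_in_if_rtranclp)
qed

section \<open>Weakly simplicial vertices\<close>

definition far_from :: "('a \<Rightarrow> 'a \<Rightarrow> bool) \<Rightarrow> 'a set \<Rightarrow> 'a set \<Rightarrow> 'a \<Rightarrow> bool" where
  "far_from E W S x \<longleftrightarrow> x \<notin> S \<and> nbhd E W x \<inter> S = {}"

text \<open>In triangle-free graphs this is Uehara's notion of a weakly simplicial vertex.\<close>

definition weakly_simplicial :: "('a \<Rightarrow> 'a \<Rightarrow> bool) \<Rightarrow> 'a set \<Rightarrow> 'a \<Rightarrow> bool" where
  "weakly_simplicial E W x \<longleftrightarrow>
     x \<in> W \<and> nbhd E W x \<noteq> {} \<and> chain\<^sub>\<subseteq> (nbhd E W ` nbhd E W x)"

lemma weakly_simplicial_transfer: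
  assumes "W' \<subseteq> W" "weakly_simplicial E W' x" "nbhd E W x = nbhd E W' x"
    "\<And>y. y \<in> nbhd E W' x \<Longrightarrow> nbhd E W y = g (nbhd E W' y)" "mono g"
  shows "weakly_simplicial E W x"
proof -
  have "nbhd E W y1 \<subseteq> nbhd E W y2 \<or> nbhd E W y2 \<subseteq> nbhd E W y1"
    if "y1 \<in> nbhd E W' x" "y2 \<in> nbhd E W' x" for y1 y2
    using assms(2,4,5) that unfolding weakly_simplicial_def chain_subset_def
    by (metis image_eqI monoD)
  then show ?thesis using assms(1-3) by (auto simp: weakly_simplicial_def chain_subset_def)
qed

lemma far_from_mono: "far_from E W S' x \<Longrightarrow> S \<subseteq> S' \<Longrightarrow> far_from E W S x"
  by (auto simp: far_from_def)

lemma weakly_simplicial_insert_far: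
  assumes sym: "\<And>u v. E u v \<Longrightarrow> E v u"
    and x: "weakly_simplicial E W x" "far_from E W (nbhd E W y) x"
  shows "weakly_simplicial E (insert y W) x" "far_from E (insert y W) (nbhd E W y) x"
proof -
  have x_W: "x \<in> W" using x(1) by (simp add: weakly_simplicial_def)
  have not_y: "\<not> E v y" if "v \<in> insert x (nbhd E W x)" for v
    using that x(2) x_W sym by (auto simp: far_from_def nbhd_def)
  then show "weakly_simplicial E (insert y W) x"
    by (intro weakly_simplicial_transfer[OF _ x(1), of _ id]) (auto simp: nbhd_insert mono_def)
  show "far_from E (insert y W) (nbhd E W y) x"
    using x(2) not_y by (auto simp: far_from_def nbhd_insert)
qed

lemma weakly_simplicial_biclique:
  assumes sym: "\<And>u v. E u v \<Longrightarrow> E v u" and fin: "finite W" and x: "weakly_simplicial E W x"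
    and triangle_free: "\<And>y z. y \<in> W \<Longrightarrow> z \<in> W \<Longrightarrow> E x y \<Longrightarrow> E y z \<Longrightarrow> \<not> E x z"
  shows "has_biclique E W (min_degree E W)"
proof -
  define d where "d = min_degree E W"
  define Y where "Y = nbhd E W x"
  have fin_nbhd: "finite (nbhd E W v)" for v using fin by (simp add: nbhd_def)
  have d: "d \<le> card (nbhd E W v)" if "v \<in> W" for v
    using min_degree_le_ideg[OF fin that] by (simp add: d_def ideg_eq_card_nbhd)
  have Y: "Y \<noteq> {}" "Y \<subseteq> W" "chain\<^sub>\<subseteq> (nbhd E W ` Y)" "x \<in> W"
    using x by (auto simp: weakly_simplicial_def Y_def nbhd_def)
  obtain z where z: "z \<in> Y" and z_min: "\<And>y. y \<in> Y \<Longrightarrow> card (nbhd E W z) \<le> card (nbhd E W y)"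
    using ex_has_least_nat[of "\<lambda>y. y \<in> Y" _ "\<lambda>y. card (nbhd E W y)"] Y(1) by blast
  have z_least: "nbhd E W z \<subseteq> nbhd E W y" if y: "y \<in> Y" for y
  proof -
    have "nbhd E W z \<subseteq> nbhd E W y \<or> nbhd E W y \<subseteq> nbhd E W z"
      using Y(3) z y unfolding chain_subset_def by blast
    then show ?thesis using card_subset_eq[OF fin_nbhd] z_min[OF y] by (metis le_antisym card_mono[OF fin_nbhd])
  qed
  have "d \<le> card (nbhd E W z)" using d z Y(2) by blast
  then obtain A where A: "A \<subseteq> nbhd E W z" "card A = d" "finite A"
    by (rule obtain_subset_with_card_n)
  have "d \<le> card Y" using d[OF Y(4)] by (simp add: Y_def)
  then obtain B where B: "B \<subseteq> Y" "card B = d" "finite B"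
    by (rule obtain_subset_with_card_n)
  have "A \<inter> B = {}"
    using A(1) B(1) z triangle_free by (auto simp: Y_def nbhd_def)
  moreover have "E a b" if "a \<in> A" "b \<in> B" for a b
  proof -
    have "a \<in> nbhd E W b" using A(1) B(1) z_least[of b] that by blast
    then show ?thesis using sym by (simp add: nbhd_def)
  qed
  moreover have "A \<subseteq> W" "B \<subseteq> W" using A(1) B(1) Y(2) by (auto simp: nbhd_def)
  ultimately show ?thesis using A B unfolding has_biclique_def d_def by blast
qed

section \<open>Graphs whose induced cycles all have length four\<close>

locale chordal_bipartite =
  fixes V :: "'a set" and E :: "'a \<Rightarrow> 'a \<Rightarrow> bool"
  assumes finite_V: "finite V"
    and E_sym: "\<And>u v. E u v \<Longrightarrow> E v u"
    and E_irrefl: "\<And>v. \<not> E v v"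
    and no_induced_cycle: "\<And>k. k \<noteq> 4 \<Longrightarrow> \<not> has_induced_cycle V E k"
begin

lemma induced_path_apex_length:
  assumes "induced_path E r" "2 \<le> length r" "set r \<subseteq> V"
    and "a \<in> V" "a \<notin> set r" "E a (hd r)" "E a (last r)" "\<forall>z\<in>set (butlast (tl r)). \<not> E a z"
  shows "length r = 3"
proof -
  have "has_induced_cycle V E (Suc (length r))"
    by (rule induced_path_close_cycle) (use assms E_sym E_irrefl in auto)
  then have "Suc (length r) = 4" using no_induced_cycle by blast
  then show ?thesis by simp
qed

lemma induced_path_ConsI:
  "induced_path E xs \<Longrightarrow> a \<notin> set xs \<Longrightarrow> (xs \<noteq> [] \<longrightarrow> E a (hd xs)) \<Longrightarrow> \<forall>z\<in>set (tl xs). \<not> E a z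
    \<Longrightarrow> induced_path E (a # xs)"
  using induced_path_Cons[of E a xs] E_sym E_irrefl by blast

lemma triangle_free:
  assumes "a \<in> V" "b \<in> V" "c \<in> V" "E a b" "E b c" "E a c"
  shows False
proof -
  have "induced_path E [b, c]"
    using assms E_irrefl by (intro induced_path_ConsI induced_path_Nil) auto
  from induced_path_apex_length[OF this, of a] show False using assms E_irrefl by auto
qed

lemma no_induced_pentagon:
  assumes V: "y \<in> V" "u \<in> V" "v \<in> V" "a \<in> V" "b \<in> V"
    and E: "E u v" "E u a" "E v b" "E y a" "E y b" and nE: "\<not> E y u" "\<not> E y v"
  shows False
proof -
  have "\<not> E a v" "\<not> E u b" "\<not> E a b"
    using triangle_free[of u a v] triangle_free[of u v b] triangle_free[of y a b] V E E_sym by blast+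
  moreover have "a \<noteq> b" using triangle_free[of u v a] V E E_sym by blast
  ultimately have path: "induced_path E [a, u, v, b]"
    using V E nE E_sym E_irrefl
    by (intro induced_path_ConsI induced_path_Nil) auto
  moreover have "y \<noteq> a" "y \<noteq> b" "y \<noteq> u" "y \<noteq> v" using E nE E_irrefl E_sym by metis+
  ultimately show False
    using induced_path_apex_length[of "[a, u, v, b]" y] V E nE by auto
qed

lemma no_induced_hexagon:
  assumes V: "s1 \<in> V" "s2 \<in> V" "s3 \<in> V" "c1 \<in> V" "c2 \<in> V" "c3 \<in> V"
    and indep: "\<not> E s1 s2" "\<not> E s1 s3" "\<not> E s2 s3"
    and E: "E s1 c2" "E s1 c3" "E s2 c1" "E s2 c3" "E s3 c1" "E s3 c2"
    and nE: "\<not> E s1 c1" "\<not> E s2 c2" "\<not> E s3 c3"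
  shows False
proof -
  have nc: "\<not> E c1 c2" "\<not> E c1 c3" "\<not> E c2 c3"
    using triangle_free[of c1 c2 s3] triangle_free[of c1 c3 s2] triangle_free[of c2 c3 s1] V E E_sym
    by blast+
  have indep': "\<not> E s2 s1" "\<not> E s3 s1" "\<not> E s3 s2" using indep E_sym by blast+
  have distinct: "distinct [s1, c3, s2, c1, s3, c2]"
    using indep indep' E nE E_irrefl by simp metis
  then have "induced_path E [c3, s2, c1, s3, c2]"
    using nc indep E nE E_sym by (intro induced_path_ConsI induced_path_Nil) auto
  moreover have "s1 \<notin> set [c3, s2, c1, s3, c2]" using distinct by simp
  ultimately show False
    using induced_path_apex_length[of "[c3, s2, c1, s3, c2]" s1] V E nE indep by auto
qed

text \<open>
  A shortest walk in \<open>D\<close> from a neighbour of \<open>s1\<close> to a neighbour of \<open>s2\<close> is an induced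
  path; unless it is a single vertex, it closes through \<open>s1\<close>, \<open>y\<close> and \<open>s2\<close> to an induced
  cycle of length at least 5.
\<close>
lemma common_neighbour_of_pair:
  assumes y: "y \<in> V" "y \<notin> D" "\<forall>c\<in>D. \<not> E y c" and D: "D \<subseteq> V"
    and s: "s1 \<in> V" "s2 \<in> V" "s1 \<notin> D" "s2 \<notin> D" "E y s1" "E y s2"
    and p0: "walk_in E D p0" "E s1 (hd p0)" "E s2 (last p0)"
  shows "\<exists>c\<in>D. E s1 c \<and> E s2 c"
proof -
  obtain p where p: "walk_in E D p" "induced_path E p" "E s1 (hd p)" "E s2 (last p)"
    and s1_far: "\<And>i. 0 < i \<Longrightarrow> i < length p \<Longrightarrow> \<not> E s1 (p!i)"
    and s2_far: "\<And>i. Suc i < length p \<Longrightarrow> \<not> E s2 (p!i)"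
    using shortest_walk_induced_path[of E D p0 "E s1" "E s2"] E_sym E_irrefl p0 by blast
  have p_D: "set p \<subseteq> D" "p \<noteq> []" using p(1) by (auto simp: walk_in_def)
  show ?thesis
  proof (cases "length p = 1")
    case True
    then have "hd p = last p" by (cases p) auto
    then show ?thesis using p p_D by (metis hd_in_set subsetD)
  next
    case False
    moreover have "length p \<noteq> 0" using p_D(2) by simp
    ultimately have len: "2 \<le> length p" by linarith
    have "s1 \<noteq> s2" "\<not> E s1 s2"
      using s1_far[of 1] s2_far[of 0] p(3,4) len triangle_free[of y s1 s2] s y E_sym
      by (auto simp: hd_conv_nth last_conv_nth p_D(2))
    have "\<forall>z\<in>set (butlast p). \<not> E z s2"
    proof
      fix z assume "z \<in> set (butlast p)"
      then obtain i where "Suc i < length p" "z = p ! i"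
        by (auto simp: in_set_conv_nth nth_butlast less_diff_conv)
      then show "\<not> E z s2" using s2_far E_sym by blast
    qed
    then have "induced_path E (p @ [s2])"
      using induced_path_snoc[of E s2 p] E_sym E_irrefl p(2,4) s(4) p_D by blast
    moreover have "\<forall>z\<in>set (tl (p @ [s2])). \<not> E s1 z"
      using s1_far \<open>\<not> E s1 s2\<close> p_D(2) by (auto simp: in_set_conv_nth nth_tl)
    ultimately have "induced_path E (s1 # p @ [s2])"
      using s p_D p(3) \<open>s1 \<noteq> s2\<close> by (intro induced_path_ConsI) auto
    then have "length (s1 # p @ [s2]) = 3"
      by (rule induced_path_apex_length) (use len y s p_D D E_irrefl in auto)
    then show ?thesis using len by simp
  qed
qed

text \<open>
  If \<open>S\<close> had no common neighbour, three of its vertices \<open>s\<^sub>i\<close> with common neighbours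
  \<open>c\<^sub>i\<close> of \<open>S - {s\<^sub>i}\<close> would form an induced 6-cycle.
\<close>
lemma common_neighbour_of_all:
  assumes "S \<subseteq> V" "D \<subseteq> V" "S \<inter> D = {}" "S \<noteq> {}"
    and indep: "\<And>s1 s2. s1 \<in> S \<Longrightarrow> s2 \<in> S \<Longrightarrow> \<not> E s1 s2"
    and pair: "\<And>s1 s2. s1 \<in> S \<Longrightarrow> s2 \<in> S \<Longrightarrow> \<exists>c\<in>D. E s1 c \<and> E s2 c"
  shows "\<exists>c\<in>D. \<forall>s\<in>S. E s c"
  using assms
proof (induction "card S" arbitrary: S rule: less_induct)
  case less
  have fin: "finite S" using less.prems(1) finite_V by (rule finite_subset)
  obtain s1 where s1: "s1 \<in> S" using less.prems(4) by blast
  show ?case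
  proof (cases "\<exists>s2\<in>S. \<exists>s3\<in>S. distinct [s1, s2, s3]")
    case no_three: False
    have "\<exists>s2\<in>S. S \<subseteq> {s1, s2}"
      using s1 no_three by (cases "S \<subseteq> {s1}") fastforce+
    then show ?thesis using less.prems(6)[OF s1] by blast
  next
    case True
    then obtain s2 s3 where s23: "s2 \<in> S" "s3 \<in> S" "distinct [s1, s2, s3]" by blast
    have drop_one: "\<exists>c\<in>D. \<forall>s\<in>S - {t}. E s c" if "t \<in> S" "u \<in> S" "u \<noteq> t" for t u
      using that less.prems by (intro less.hyps[OF card_Diff1_less[OF fin that(1)]]) auto
    obtain c1 where c1: "c1 \<in> D" "\<forall>s\<in>S - {s1}. E s c1" using drop_one[OF s1 s23(1)] s23 by auto
    obtain c2 where c2: "c2 \<in> D" "\<forall>s\<in>S - {s2}. E s c2" using drop_one[OF s23(1) s1] s23 by auto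
    obtain c3 where c3: "c3 \<in> D" "\<forall>s\<in>S - {s3}. E s c3" using drop_one[OF s23(2) s1] s23 by auto
    show ?thesis
    proof (rule ccontr)
      assume "\<not> ?thesis"
      then have "\<not> E s1 c1" "\<not> E s2 c2" "\<not> E s3 c3" using c1 c2 c3 by auto
      moreover have "E s1 c2" "E s1 c3" "E s2 c1" "E s2 c3" "E s3 c1" "E s3 c2"
        using c1 c2 c3 s1 s23 by auto
      moreover have "\<not> E s1 s2" "\<not> E s1 s3" "\<not> E s2 s3" using less.prems(5) s1 s23 by auto
      ultimately show False
        using no_induced_hexagon[of s1 s2 s3 c1 c2 c3] less.prems(1,2) s1 s23 c1 c2 c3 by blast
    qed
  qed
qed

lemma weakly_simplicial_insert_adjacent:
  assumes W: "W \<subseteq> V" "y \<in> V"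
    and meets: "\<And>u v. u \<in> W \<Longrightarrow> v \<in> W \<Longrightarrow> E u v \<Longrightarrow> E y u \<or> E y v"
    and x: "weakly_simplicial E W x" and "E y x"
  shows "weakly_simplicial E (insert y W) x"
proof -
  have x_W: "x \<in> W" "chain\<^sub>\<subseteq> (nbhd E W ` nbhd E W x)" using x by (auto simp: weakly_simplicial_def)
  have nbhd_x: "nbhd E (insert y W) x = insert y (nbhd E W x)"
    using \<open>E y x\<close> E_sym by (simp add: nbhd_insert)
  have below_y: "nbhd E (insert y W) z = nbhd E W z" "nbhd E W z \<subseteq> nbhd E (insert y W) y"
    if z: "z \<in> nbhd E W x" for z
  proof -
    have "\<not> E y z" using triangle_free[of x z y] z x_W W \<open>E y x\<close> E_sym by (auto simp: nbhd_def)
    then show "nbhd E (insert y W) z = nbhd E W z" using E_sym by (auto simp: nbhd_insert)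
    show "nbhd E W z \<subseteq> nbhd E (insert y W) y"
      using meets[of z] \<open>\<not> E y z\<close> z by (auto simp: nbhd_def)
  qed
  have "chain\<^sub>\<subseteq> (nbhd E (insert y W) ` nbhd E (insert y W) x)"
    unfolding nbhd_x chain_subset_def
  proof (intro ballI)
    fix A B assume "A \<in> nbhd E (insert y W) ` insert y (nbhd E W x)"
      "B \<in> nbhd E (insert y W) ` insert y (nbhd E W x)"
    then obtain a b where a: "a \<in> insert y (nbhd E W x)" "A = nbhd E (insert y W) a"
      and b: "b \<in> insert y (nbhd E W x)" "B = nbhd E (insert y W) b" by blast
    show "A \<subseteq> B \<or> B \<subseteq> A"
    proof (cases "a = y \<or> b = y")
      case True
      then show ?thesis using a b below_y by auto
    next
      case False
      then show ?thesis using a b below_y(1) x_W(2) by (simp add: chain_subset_def)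
    qed
  qed
  then show ?thesis using x_W(1) by (auto simp: weakly_simplicial_def nbhd_x)
qed

lemma weakly_simplicial_insert:
  assumes W: "W \<subseteq> V" "y \<in> V"
    and meets: "\<And>u v. u \<in> W \<Longrightarrow> v \<in> W \<Longrightarrow> E u v \<Longrightarrow> E y u \<or> E y v"
    and x: "weakly_simplicial E W x"
  shows "weakly_simplicial E (insert y W) x"
proof (cases "E y x")
  case True
  then show ?thesis using weakly_simplicial_insert_adjacent[OF W meets x] by blast
next
  case False
  have "x \<in> W" using x by (simp add: weakly_simplicial_def)
  then have "nbhd E (insert y W) z = insert y (nbhd E W z)" if "z \<in> nbhd E W x" for z
    using meets[of x z] that False E_sym by (auto simp: nbhd_insert nbhd_def)
  moreover have "nbhd E (insert y W) x = nbhd E W x" using False E_sym by (auto simp: nbhd_insert)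
  ultimately show ?thesis
    by (intro weakly_simplicial_transfer[OF _ x, of _ "insert y"]) (auto intro: monoI)
qed

lemma common_neighbour_of_outer_nbhd:
  assumes W: "W \<subseteq> V" "y \<in> V" "y \<notin> W" and S: "S = nbhd E W y" "S \<noteq> {}"
    and x1: "x1 \<in> W - S" and touch: "\<forall>s\<in>S. \<exists>c\<in>component E (W - S) x1. E s c"
  shows "\<exists>c\<in>W - S. \<forall>s\<in>S. E s c"
proof (rule common_neighbour_of_all)
  have S_W: "S \<subseteq> W" using S by (auto simp: nbhd_def)
  then show "S \<subseteq> V" "W - S \<subseteq> V" "S \<inter> (W - S) = {}" using W by auto
  show "S \<noteq> {}" by (fact S(2))
  show "\<not> E s1 s2" if "s1 \<in> S" "s2 \<in> S" for s1 s2
    using triangle_free[of y s1 s2] that S S_W W by (auto simp: nbhd_def)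
  show "\<exists>c\<in>W - S. E s1 c \<and> E s2 c" if s: "s1 \<in> S" "s2 \<in> S" for s1 s2
  proof -
    obtain c1 c2 where c: "c1 \<in> component E (W - S) x1" "c2 \<in> component E (W - S) x1" "E s1 c1" "E s2 c2"
      using touch s by blast
    obtain p where p: "walk_in E (W - S) p" "hd p = c1" "last p = c2"
      using walk_in_component[where E=E and D="W - S" and x=x1 and a=c1 and b=c2] E_sym x1 c(1,2) by blast
    have y_far: "\<forall>c\<in>W - S. \<not> E y c" using S(1) by (auto simp: nbhd_def)
    have "s1 \<in> V" "s2 \<in> V" "s1 \<notin> W - S" "s2 \<notin> W - S" "E y s1" "E y s2"
      using s S(1) S_W W(1) by (auto simp: nbhd_def)
    then show ?thesis
      using common_neighbour_of_pair[OF W(2) _ y_far _ _ _ _ _ _ _ p(1)] W p c(3,4) by blast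
  qed
qed

definition outer_nbhd :: "'a set \<Rightarrow> 'a set \<Rightarrow> bool" where
  "outer_nbhd W S \<longleftrightarrow> S = {} \<or> (\<exists>y\<in>V - W. S = nbhd E W y)"

lemma outer_nbhd_subset: "outer_nbhd W S \<Longrightarrow> S \<subseteq> W"
  by (auto simp: outer_nbhd_def nbhd_def)

lemma outer_nbhd_restrict: "outer_nbhd W S \<Longrightarrow> W' \<subseteq> W \<Longrightarrow> outer_nbhd W' (S \<inter> W')"
  by (auto simp: outer_nbhd_def nbhd_def)

definition has_far_weakly_simplicial :: "'a set \<Rightarrow> bool" where
  "has_far_weakly_simplicial W \<longleftrightarrow> (\<forall>S x1. outer_nbhd W S \<longrightarrow> x1 \<in> W \<longrightarrow> nbhd E W x1 \<noteq> {} \<longrightarrow>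
     far_from E W S x1 \<longrightarrow> (\<exists>x. weakly_simplicial E W x \<and> far_from E W S x))"

lemma edge_meets_nbhd:
  assumes W: "W \<subseteq> V" "y \<in> V"
    and near: "\<And>z. z \<in> W \<Longrightarrow> nbhd E W z \<noteq> {} \<Longrightarrow> \<not> far_from E W (nbhd E W y) z"
    and uv: "u \<in> W" "v \<in> W" "E u v"
  shows "E y u \<or> E y v"
proof (rule ccontr)
  assume not: "\<not> (E y u \<or> E y v)"
  have "nbhd E W u \<inter> nbhd E W y \<noteq> {}"
    using near[OF uv(1)] uv not by (auto simp: far_from_def nbhd_def)
  then obtain a where a: "a \<in> W" "E u a" "E y a" by (auto simp: nbhd_def)
  have "nbhd E W v \<inter> nbhd E W y \<noteq> {}"
    using near[OF uv(2)] uv not E_sym by (auto simp: far_from_def nbhd_def)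
  then obtain b where b: "b \<in> W" "E v b" "E y b" by (auto simp: nbhd_def)
  show False using no_induced_pentagon[of y u v a b] W uv not a b by blast
qed

lemma far_weakly_simplicial_delete:
  assumes IH: "has_far_weakly_simplicial (W - {y})"
    and W: "W \<subseteq> V" "outer_nbhd W S"
    and x1: "x1 \<in> W" "nbhd E W x1 \<noteq> {}" "far_from E W S x1"
    and y: "y \<in> W" "y \<notin> S" "y \<noteq> x1" "S \<subseteq> nbhd E W y"
  shows "\<exists>x. weakly_simplicial E W x \<and> far_from E W S x"
proof -
  define W' where "W' = W - {y}"
  have W_eq: "W = insert y W'" "y \<notin> W'" "W' \<subseteq> V" using y(1) W(1) by (auto simp: W'_def)
  have S_W': "S \<subseteq> nbhd E W' y" using y(2,4) by (auto simp: W'_def nbhd_def)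
  show ?thesis
  proof (cases "\<exists>z\<in>W'. nbhd E W' z \<noteq> {} \<and> far_from E W' (nbhd E W' y) z")
    case True
    then obtain z where z: "z \<in> W'" "nbhd E W' z \<noteq> {}" "far_from E W' (nbhd E W' y) z" by blast
    have "outer_nbhd W' (nbhd E W' y)" using W_eq y(1) W(1) by (auto simp: outer_nbhd_def)
    then obtain x where x: "weakly_simplicial E W' x" "far_from E W' (nbhd E W' y) x"
      using IH z unfolding has_far_weakly_simplicial_def W'_def by blast
    then have "weakly_simplicial E W x" "far_from E W (nbhd E W' y) x"
      unfolding W_eq(1) using weakly_simplicial_insert_far[OF E_sym x] by simp_all
    then show ?thesis using far_from_mono[OF _ S_W'] by blast
  next
    case False
    have meets: "E y u \<or> E y v" if "u \<in> W'" "v \<in> W'" "E u v" for u v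
      using edge_meets_nbhd[OF W_eq(3)] False that W(1) y(1) by blast
    show ?thesis
    proof (cases "nbhd E W' x1 = {}")
      case True
      then have "nbhd E W x1 = {y}" using x1(1,2) unfolding W_eq(1) by (auto simp: nbhd_insert split: if_splits)
      then have "weakly_simplicial E W x1" using x1(1) by (simp add: weakly_simplicial_def chain_subset_def)
      then show ?thesis using x1(3) by blast
    next
      case False
      have "S \<inter> W' = S" using outer_nbhd_subset[OF W(2)] y(2) by (auto simp: W'_def)
      then have "outer_nbhd W' S" using outer_nbhd_restrict[OF W(2), of W'] by (auto simp: W'_def)
      moreover have "x1 \<in> W'" "far_from E W' S x1"
        using x1 y(3) by (auto simp: W'_def far_from_def nbhd_def)
      ultimately obtain x where x: "weakly_simplicial E W' x" "far_from E W' S x"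
        using IH False unfolding has_far_weakly_simplicial_def W'_def by blast
      have "weakly_simplicial E W x"
        unfolding W_eq(1) using W_eq(3) W(1) y(1) meets x(1) by (intro weakly_simplicial_insert) auto
      moreover have "far_from E W S x"
        using x(2) y(2) unfolding W_eq(1) by (auto simp: far_from_def nbhd_insert)
      ultimately show ?thesis by blast
    qed
  qed
qed

lemma far_weakly_simplicial_component:
  assumes IH: "has_far_weakly_simplicial (C \<union> T)"
    and W: "W \<subseteq> V" "outer_nbhd W S"
    and x1: "x1 \<in> W" "nbhd E W x1 \<noteq> {}" "far_from E W S x1"
    and C: "C = component E (W - S) x1" and T: "T = {s \<in> S. \<exists>c\<in>C. E s c}"
  shows "\<exists>x. weakly_simplicial E W x \<and> far_from E W S x"
proof -
  have x1_WS: "x1 \<in> W - S" using x1 by (auto simp: far_from_def)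
  have C_WS: "C \<subseteq> W - S" using component_subset[OF x1_WS] C by simp
  have S_W: "S \<subseteq> W" by (rule outer_nbhd_subset[OF W(2)])
  have CT_W: "C \<union> T \<subseteq> W" using C_WS S_W T by auto
  have C_closed: "w \<in> C" if "c \<in> C" "w \<in> W - S" "E c w" for c w
    using component_closed[OF x1_WS] that C by blast
  have nbhd_C: "nbhd E W c = nbhd E (C \<union> T) c" if c: "c \<in> C" for c
  proof -
    have "w \<in> C \<union> T" if "w \<in> W" "E c w" for w
      using C_closed[OF c] that T c E_sym by (cases "w \<in> S") auto
    then show ?thesis using CT_W by (auto simp: nbhd_def)
  qed
  have "S \<inter> (C \<union> T) = T" using C_WS T by auto
  then have "outer_nbhd (C \<union> T) T" using outer_nbhd_restrict[OF W(2) CT_W] by simp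
  moreover have x1_C: "x1 \<in> C" using C by (simp add: self_in_component)
  moreover have "nbhd E (C \<union> T) x1 \<noteq> {}" "far_from E (C \<union> T) T x1"
    using x1 nbhd_C[OF x1_C] T by (auto simp: far_from_def nbhd_def)
  ultimately obtain x where x: "weakly_simplicial E (C \<union> T) x" "far_from E (C \<union> T) T x"
    using IH unfolding has_far_weakly_simplicial_def by blast
  have x_C: "x \<in> C" and nbhd_x_C: "nbhd E (C \<union> T) x \<subseteq> C"
    using x by (auto simp: weakly_simplicial_def far_from_def nbhd_def)
  have "weakly_simplicial E W x"
    using nbhd_C x_C nbhd_x_C
    by (intro weakly_simplicial_transfer[OF CT_W x(1), of id]) (auto simp: mono_def)
  moreover have "far_from E W S x"
    using nbhd_C[OF x_C] nbhd_x_C x_C C_WS by (auto simp: far_from_def)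
  ultimately show ?thesis by blast
qed

lemma far_weakly_simplicial: "W \<subseteq> V \<Longrightarrow> has_far_weakly_simplicial W"
proof (induction "card W" arbitrary: W rule: less_induct)
  case less
  have IH: "has_far_weakly_simplicial W'" if "W' \<subset> W" for W'
    using less.hyps[OF psubset_card_mono[OF finite_subset[OF less.prems finite_V] that]] that less.prems
    by blast
  show ?case unfolding has_far_weakly_simplicial_def
  proof (intro allI impI)
    fix S x1 assume S: "outer_nbhd W S" and x1: "x1 \<in> W" "nbhd E W x1 \<noteq> {}" "far_from E W S x1"
    define C where "C = component E (W - S) x1"
    define T where "T = {s \<in> S. \<exists>c\<in>C. E s c}"
    have C_WS: "C \<subseteq> W - S"
      using component_subset[of x1 "W - S" E] x1 by (auto simp: C_def far_from_def)
    have CT_W: "C \<union> T \<subseteq> W" using C_WS outer_nbhd_subset[OF S] by (auto simp: T_def)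
    consider "C \<union> T \<noteq> W" | "S = {}" | "C \<union> T = W" "S \<noteq> {}" by blast
    then show "\<exists>x. weakly_simplicial E W x \<and> far_from E W S x"
    proof cases
      case 1
      then show ?thesis
        using far_weakly_simplicial_component[OF IH less.prems S x1 C_def T_def] CT_W by blast
    next
      case 2
      obtain y where "y \<in> W" "E x1 y" using x1(2) by (auto simp: nbhd_def)
      then show ?thesis
        using far_weakly_simplicial_delete[OF IH less.prems S x1, of y] 2 E_irrefl by blast
    next
      case 3
      then obtain z where z: "z \<in> V - W" "S = nbhd E W z" using S by (auto simp: outer_nbhd_def)
      have "\<forall>s\<in>S. \<exists>c\<in>C. E s c" using 3(1) C_WS outer_nbhd_subset[OF S] by (auto simp: T_def)
      then obtain y where y: "y \<in> W - S" "\<forall>s\<in>S. E s y"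
        using common_neighbour_of_outer_nbhd[of W z S x1] less.prems z 3(2) x1
        by (auto simp: C_def far_from_def)
      have "y \<noteq> x1" using y 3(2) x1(3) outer_nbhd_subset[OF S] E_sym by (auto simp: far_from_def nbhd_def)
      moreover have "S \<subseteq> nbhd E W y" using y outer_nbhd_subset[OF S] E_sym by (auto simp: nbhd_def)
      moreover have "W - {y} \<subset> W" using y by auto
      ultimately show ?thesis
        using far_weakly_simplicial_delete[OF IH less.prems S x1, of y] y by blast
    qed
  qed
qed

lemma degree_perfect: "degree_perfect V E"
  unfolding degree_perfect_def
proof (intro allI impI)
  fix S assume S: "S \<subseteq> V \<and> S \<noteq> {}"
  then have fin: "finite S" using finite_V finite_subset by blast
  show "min_degree E S \<le> biclique_number E S"
  proof (cases "min_degree E S = 0")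
    case False
    obtain x1 where x1: "x1 \<in> S" using S by blast
    then have "nbhd E S x1 \<noteq> {}"
      using min_degree_le_ideg[where E=E, OF fin x1] False by (auto simp: ideg_eq_card_nbhd)
    moreover have "outer_nbhd S {}" "far_from E S {} x1" by (simp_all add: outer_nbhd_def far_from_def)
    ultimately obtain x where x: "weakly_simplicial E S x"
      using far_weakly_simplicial[of S] S x1 unfolding has_far_weakly_simplicial_def by blast
    have "x \<in> V" using x S by (auto simp: weakly_simplicial_def)
    then have "has_biclique E S (min_degree E S)"
      using weakly_simplicial_biclique[OF E_sym fin x] triangle_free S by blast
    then show ?thesis by (rule has_biclique_le_biclique_number[OF fin])
  qed simp
qed

end

theorem theorem3p7:
  fixes V :: "'a set" and E :: "'a \<Rightarrow> 'a \<Rightarrow> bool"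
  assumes "simple_graph V E"
  shows "degree_perfect V E \<longleftrightarrow> (\<forall>k. k \<noteq> 4 \<longrightarrow> \<not> has_induced_cycle V E k)"
proof
  show "degree_perfect V E \<Longrightarrow> \<forall>k. k \<noteq> 4 \<longrightarrow> \<not> has_induced_cycle V E k"
    using induced_cycle_not_degree_perfect by blast
next
  assume "\<forall>k. k \<noteq> 4 \<longrightarrow> \<not> has_induced_cycle V E k"
  then interpret chordal_bipartite V E
    using assms by unfold_locales (auto simp: simple_graph_def)
  show "degree_perfect V E" by (rule degree_perfect)
qed

end
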